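(* Let $\alpha,\gamma,\mu,\delta,\rho>0$, $\beta=\alpha+\gamma$, and consider \[ \dot P=P\big[(\beta-\mu)-2\beta P+(\delta-\beta)A\big],\qquad \dot A=-(2\delta P+\rho)A \] on $\mathcal F=\{(P,A): P\ge0,\ A\ge0,\ 2P+A\le1\}$. (i) If $\beta\le\mu$, then $E_0=(0,0)$ is globally asymptotically stable on $\mathcal F$: $P(t)\to0$ and $A(t)\to0$ for all initial conditions in $\mathcal F$. (ii) If $\beta>\mu$, then the edge $\{P=0\}$ is forward invariant; every initial condition with $P_0=0$ gives $P(t)\equiv0$, $A(t)\to0$, so the trajectory converges to $E_0$; every initial condition in $\mathcal F$ with $P_0>0$ converges to $E_1=\big(\tfrac12(1-\mu/\beta),0\big)$. In this regime $E_0$ is a saddle and $E_1$ is locally asymptotically stable. *)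

theory Defs
  imports "HOL-Analysis.Analysis"
begin

definition pa_field :: "real \<Rightarrow> real \<Rightarrow> real \<Rightarrow> real \<Rightarrow> real \<Rightarrow> real \<times> real \<Rightarrow> real \<times> real" where
  "pa_field \<alpha> \<gamma> \<mu> \<delta> \<rho> z =
     (let \<beta> = \<alpha> + \<gamma>; p = fst z; a = snd z in
      (p * ((\<beta> - \<mu>) - 2 * \<beta> * p + (\<delta> - \<beta>) * a), - (2 * \<delta> * p + \<rho>) * a))"

definition feas :: "(real \<times> real) set" where
  "feas = {z. fst z \<ge> 0 \<and> snd z \<ge> 0 \<and> 2 * fst z + snd z \<le> 1}"

definition is_solution :: "('a::real_normed_vector \<Rightarrow> 'a) \<Rightarrow> (real \<Rightarrow> 'a) \<Rightarrow> bool" where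
  "is_solution f x \<longleftrightarrow>
     (\<forall>t\<ge>0. (x has_vector_derivative f (x t)) (at t within {0..}))"

definition loc_asym_stable :: "'a set \<Rightarrow> ('a::real_normed_vector \<Rightarrow> 'a) \<Rightarrow> 'a \<Rightarrow> bool" where
  "loc_asym_stable S f e \<longleftrightarrow>
     f e = 0 \<and>
     (\<forall>\<epsilon>>0. \<exists>d>0. \<forall>x. is_solution f x \<and> x 0 \<in> S \<and> dist (x 0) e < d \<longrightarrow>
          (\<forall>t\<ge>0. dist (x t) e < \<epsilon>)) \<and>
     (\<exists>\<eta>>0. \<forall>x. is_solution f x \<and> x 0 \<in> S \<and> dist (x 0) e < \<eta> \<longrightarrow>
          (x \<longlongrightarrow> e) at_top)"

definition glob_asym_stable :: "'a set \<Rightarrow> ('a::real_normed_vector \<Rightarrow> 'a) \<Rightarrow> 'a \<Rightarrow> bool" where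
  "glob_asym_stable S f e \<longleftrightarrow>
     loc_asym_stable S f e \<and>
     (\<forall>x. is_solution f x \<and> x 0 \<in> S \<longrightarrow> (x \<longlongrightarrow> e) at_top)"

definition is_saddle :: "('a::real_normed_vector \<Rightarrow> 'a) \<Rightarrow> 'a \<Rightarrow> bool" where
  "is_saddle f e \<longleftrightarrow>
     f e = 0 \<and>
     (\<exists>J. (f has_derivative J) (at e) \<and>
        (\<exists>v1 v2 l1 l2. v1 \<noteq> 0 \<and> v2 \<noteq> 0 \<and> J v1 = l1 *\<^sub>R v1 \<and> J v2 = l2 *\<^sub>R v2
                      \<and> l1 < 0 \<and> 0 < l2))"

end

(*
  The A-equation is linear with rate -(2 delta P + rho) <= -rho, so A(t) <= A(0) exp (-rho t).
  Hence P' = P (2 beta (p_star - P) + e(t)) with p_star = (1 - mu/beta)/2 is a logistic equation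
  whose perturbation e = (delta - beta) A has total integral at most |delta - beta| A(0) / rho.
  The integrating factor exp (-integral e) reduces this to the unperturbed logistic equation, so
  P stays between min (P(0), p_star) and max (P(0), p_star) up to the factor
  exp (|delta - beta| A(0) / rho): this is Lyapunov stability of E0 (when p_star <= 0) and of
  E1 = (p_star, 0) (when p_star > 0). Once e(t) is small, P decreases at a uniform rate above
  max 0 p_star + eps and, if P(0) > 0, increases at a uniform rate below p_star - eps, which
  forces convergence. The edge P = 0 is invariant because P' is a multiple of P, and the
  Jacobian at the origin is diag (beta - mu, -rho).
*)

theory Submission
  imports Defs "HOL-Real_Asymp.Real_Asymp"
begin

lemma deriv_nonpos_above_imp_stays_below:
  fixes y y' :: "real \<Rightarrow> real"
  assumes deriv: "\<And>t. t \<ge> T \<Longrightarrow> (y has_real_derivative y' t) (at t within {T..})"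
    and start: "y T \<le> L"
    and nonpos: "\<And>t. t \<ge> T \<Longrightarrow> y t > L \<Longrightarrow> y' t \<le> 0"
    and t: "t \<ge> T"
  shows "y t \<le> L"
proof (rule ccontr)
  assume above: "\<not> y t \<le> L"
  have "continuous_on {T..} y"
    using deriv by (metis DERIV_continuous atLeast_iff continuous_on_eq_continuous_within)
  then have "closed ({T..t} \<inter> y -` {..L})"
    by (intro continuous_closed_preimage) (auto intro: continuous_on_subset)
  then have "compact ({T..t} \<inter> y -` {..L})"
    by (simp add: compact_eq_bounded_closed bounded_Int)
  moreover have "T \<in> {T..t} \<inter> y -` {..L}" using start t by auto
  ultimately obtain s where s: "s \<in> {T..t} \<inter> y -` {..L}"
    and last: "\<And>s'. s' \<in> {T..t} \<inter> y -` {..L} \<Longrightarrow> s' \<le> s"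
    using compact_attains_sup by (metis empty_iff)
  have ys: "y s \<le> L" and "s \<le> t" using s by auto
  with above have "s < t" by (cases "s = t") auto
  then obtain z where z: "s < z" "z < t" "y t - y s = (t - s) * y' z"
    using mvt_simple[of s t y "\<lambda>z h. y' z * h"] s
    by (force intro: has_field_derivative_imp_has_derivative DERIV_subset[OF deriv])
  have "y z > L" using last[of z] z s by fastforce
  then have "(t - s) * y' z \<le> 0" using nonpos[of z] z s \<open>s < t\<close> by (simp add: mult_nonneg_nonpos)
  then show False using z(3) ys above by linarith
qed

lemma deriv_le_neg_above_imp_eventually_below:
  fixes y y' :: "real \<Rightarrow> real"
  assumes deriv: "\<And>t. t \<ge> T \<Longrightarrow> (y has_real_derivative y' t) (at t within {T..})"
    and \<kappa>: "\<kappa> > 0"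
    and decrease: "\<And>t. t \<ge> T \<Longrightarrow> y t \<ge> L \<Longrightarrow> y' t \<le> - \<kappa>"
  shows "eventually (\<lambda>t. y t \<le> L) at_top"
proof -
  obtain T' where T': "T' \<ge> T" "y T' \<le> L"
  proof (rule ccontr)
    assume "\<not> thesis"
    then have above: "\<And>s. s \<ge> T \<Longrightarrow> y s > L" using that by force
    define N where "N = \<bar>y T - L\<bar> / \<kappa> + 1"
    have N: "N > 0" using \<kappa> by (simp add: N_def add_nonneg_pos)
    obtain z where z: "T < z" "y (T + N) - y T = N * y' z"
      using mvt_simple[of T "T + N" y "\<lambda>z h. y' z * h"] N
      by (force intro: has_field_derivative_imp_has_derivative DERIV_subset[OF deriv])
    have "N * y' z \<le> N * (- \<kappa>)"
      using decrease[of z] above[of z] z N by (intro mult_left_mono) auto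
    also have "\<dots> = - \<bar>y T - L\<bar> - \<kappa>" using \<kappa> by (simp add: N_def field_simps)
    finally show False using z \<kappa> above[of "T + N"] N by linarith
  qed
  have "y t \<le> L" if "t \<ge> T'" for t
  proof (rule deriv_nonpos_above_imp_stays_below[of T' y y' L t])
    show "(y has_real_derivative y' s) (at s within {T'..})" if "s \<ge> T'" for s
      using deriv[of s] that T' by (auto intro: DERIV_subset)
    show "y' s \<le> 0" if "s \<ge> T'" "y s > L" for s
      using decrease[of s] that T' \<kappa> by auto
  qed (use T' that in auto)
  then show ?thesis by (auto simp: eventually_at_top_linorder)
qed

lemma linear_ode_eq_exp_integral:
  fixes y h :: "real \<Rightarrow> real"
  assumes deriv: "\<And>t. t \<ge> 0 \<Longrightarrow> (y has_real_derivative y t * h t) (at t within {0..})"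
    and h: "continuous_on {0..} h" and t: "t \<ge> 0"
  shows "y t = y 0 * exp (integral {0..t} h)"
proof -
  define H where "H s = integral {0..s} h" for s
  have dH: "(H has_real_derivative h s) (at s within {0..t})" if "s \<in> {0..t}" for s
    unfolding H_def
    by (rule integral_has_real_derivative[OF continuous_on_subset[OF h] that]) auto
  have "((\<lambda>s. y s * exp (- H s)) has_real_derivative 0) (at s within {0..t})"
    if s: "s \<in> {0..t}" for s
    using DERIV_subset[OF deriv, of s "{0..t}"] dH[OF s] s
    by (auto intro!: derivative_eq_intros)
  then obtain c where "\<forall>s\<in>{0..t}. y s * exp (- H s) = c"
    using has_field_derivative_zero_constant[of "{0..t}"] by blast
  then have "y t * exp (- H t) = y 0 * exp (- H 0)" using t by auto
  then show ?thesis by (simp add: H_def exp_minus field_simps)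
qed

lemma deriv_nonneg_imp_ge_initial:
  fixes F e :: "real \<Rightarrow> real"
  assumes F: "\<And>t. t \<ge> 0 \<Longrightarrow> (F has_real_derivative e t) (at t within {0..})"
    and e_nonneg: "\<And>t. t \<ge> 0 \<Longrightarrow> e t \<ge> 0" and t: "t \<ge> 0"
  shows "F 0 \<le> F t"
proof -
  have "- F t \<le> - F 0"
  proof (rule deriv_nonpos_above_imp_stays_below[of 0 "\<lambda>s. - F s" "\<lambda>s. - e s"])
    show "((\<lambda>s. - F s) has_real_derivative - e s) (at s within {0..})" if "s \<ge> 0" for s
      using F[OF that] by (rule DERIV_minus)
  qed (use e_nonneg t in auto)
  then show ?thesis by simp
qed

lemma growth_upper_bound:
  fixes y g F e :: "real \<Rightarrow> real"
  assumes y: "\<And>t. t \<ge> 0 \<Longrightarrow> (y has_real_derivative y t * g t) (at t within {0..})"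
    and F: "\<And>t. t \<ge> 0 \<Longrightarrow> (F has_real_derivative e t) (at t within {0..})"
    and e_nonneg: "\<And>t. t \<ge> 0 \<Longrightarrow> e t \<ge> 0"
    and y_nonneg: "\<And>t. t \<ge> 0 \<Longrightarrow> y t \<ge> 0"
    and g: "\<And>t. t \<ge> 0 \<Longrightarrow> y t > Q \<Longrightarrow> g t \<le> e t"
    and t: "t \<ge> 0"
  shows "y t \<le> max (y 0) Q * exp (F t - F 0)"
proof -
  have F_mono: "F 0 \<le> F s" if "s \<ge> 0" for s
    using deriv_nonneg_imp_ge_initial[OF F e_nonneg that] .
  \<comment> \<open>The integrating factor removes \<open>e\<close>: \<open>u' = u (g - e) \<le> 0\<close> while \<open>y > Q\<close>.\<close>
  define u where "u s = y s * exp (F 0 - F s)" for s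
  have "u t \<le> max (y 0) Q"
  proof (rule deriv_nonpos_above_imp_stays_below[of 0 u "\<lambda>s. u s * (g s - e s)"])
    show "(u has_real_derivative u s * (g s - e s)) (at s within {0..})" if "s \<ge> 0" for s
      unfolding u_def using y[OF that] F[OF that]
      by (auto intro!: derivative_eq_intros simp: algebra_simps)
    fix s :: real assume s: "s \<ge> 0" and big: "u s > max (y 0) Q"
    have "u s \<le> y s" using y_nonneg[OF s] F_mono[OF s] by (simp add: u_def mult_left_le)
    then have "g s \<le> e s" using g[OF s] big by simp
    moreover have "u s \<ge> 0" using y_nonneg[OF s] by (simp add: u_def)
    ultimately show "u s * (g s - e s) \<le> 0" by (simp add: mult_nonneg_nonpos)
  qed (use t in \<open>auto simp: u_def\<close>)
  then have "u t * exp (F t - F 0) \<le> max (y 0) Q * exp (F t - F 0)" by simp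
  then show ?thesis by (simp add: u_def mult.assoc flip: exp_add)
qed

lemma growth_lower_bound:
  fixes y g F e :: "real \<Rightarrow> real"
  assumes y: "\<And>t. t \<ge> 0 \<Longrightarrow> (y has_real_derivative y t * g t) (at t within {0..})"
    and F: "\<And>t. t \<ge> 0 \<Longrightarrow> (F has_real_derivative e t) (at t within {0..})"
    and e_nonneg: "\<And>t. t \<ge> 0 \<Longrightarrow> e t \<ge> 0"
    and y_nonneg: "\<And>t. t \<ge> 0 \<Longrightarrow> y t \<ge> 0"
    and g: "\<And>t. t \<ge> 0 \<Longrightarrow> y t < q \<Longrightarrow> - e t \<le> g t"
    and t: "t \<ge> 0"
  shows "min (y 0) q * exp (F 0 - F t) \<le> y t"
proof -
  have F_mono: "F 0 \<le> F s" if "s \<ge> 0" for s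
    using deriv_nonneg_imp_ge_initial[OF F e_nonneg that] .
  define v where "v s = y s * exp (F s - F 0)" for s
  have "- v t \<le> - min (y 0) q"
  proof (rule deriv_nonpos_above_imp_stays_below[of 0 "\<lambda>s. - v s" "\<lambda>s. - (v s * (g s + e s))"])
    show "((\<lambda>s. - v s) has_real_derivative - (v s * (g s + e s))) (at s within {0..})"
      if "s \<ge> 0" for s
      unfolding v_def using y[OF that] F[OF that]
      by (auto intro!: derivative_eq_intros simp: algebra_simps)
    fix s :: real assume s: "s \<ge> 0" and small: "- v s > - min (y 0) q"
    have "y s \<le> v s" using y_nonneg[OF s] F_mono[OF s] by (simp add: v_def mult_le_cancel_left1)
    then have "- e s \<le> g s" using g[OF s] small by simp
    moreover have "v s \<ge> 0" using y_nonneg[OF s] by (simp add: v_def)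
    ultimately show "- (v s * (g s + e s)) \<le> 0" by simp
  qed (use t in \<open>auto simp: v_def\<close>)
  then have "min (y 0) q * exp (F 0 - F t) \<le> v t * exp (F 0 - F t)" by simp
  then show ?thesis by (simp add: v_def mult.assoc flip: exp_add)
qed

lemma loc_asym_stableI:
  fixes f :: "'a::real_normed_vector \<Rightarrow> 'a" and \<phi> :: "real \<Rightarrow> real"
  assumes equilibrium: "f e = 0"
    and \<phi>: "isCont \<phi> 0" "\<phi> 0 = 0" and r: "r > 0"
    and bound: "\<And>x t. is_solution f x \<Longrightarrow> x 0 \<in> S \<Longrightarrow> dist (x 0) e < r \<Longrightarrow> t \<ge> 0 \<Longrightarrow>
      dist (x t) e \<le> \<phi> (dist (x 0) e)"
    and attract: "\<And>x. is_solution f x \<Longrightarrow> x 0 \<in> S \<Longrightarrow> dist (x 0) e < r \<Longrightarrow>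
      (x \<longlongrightarrow> e) at_top"
  shows "loc_asym_stable S f e"
  unfolding loc_asym_stable_def
proof (intro conjI allI impI)
  fix \<epsilon> :: real assume "\<epsilon> > 0"
  then obtain d where d: "d > 0" "\<And>D. \<bar>D\<bar> < d \<Longrightarrow> \<phi> D < \<epsilon>"
    using \<phi> unfolding continuous_at_eps_delta dist_real_def by force
  have "dist (x t) e < \<epsilon>"
    if "is_solution f x" "x 0 \<in> S" "dist (x 0) e < min d r" "t \<ge> 0" for x t
  proof -
    have "dist (x t) e \<le> \<phi> (dist (x 0) e)" using bound that by simp
    also have "\<dots> < \<epsilon>" using d(2) that by simp
    finally show ?thesis .
  qed
  then show "\<exists>d>0. \<forall>x. is_solution f x \<and> x 0 \<in> S \<and> dist (x 0) e < d \<longrightarrow> (\<forall>t\<ge>0. dist (x t) e < \<epsilon>)"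
    using d r by (intro exI[of _ "min d r"]) auto
qed (use equilibrium r attract in auto)

lemma dist_Pair_le_add: "dist (a, b) (c, d) \<le> dist a c + dist b d"
  by (simp add: dist_Pair_Pair sqrt_sum_squares_le_sum)

lemma has_vector_derivative_PairD:
  fixes x :: "real \<Rightarrow> real \<times> real"
  assumes "(x has_vector_derivative (u, v)) F"
  shows "((\<lambda>s. fst (x s)) has_real_derivative u) F" and "((\<lambda>s. snd (x s)) has_real_derivative v) F"
  using has_derivative_fst[OF assms[unfolded has_vector_derivative_def]]
    has_derivative_snd[OF assms[unfolded has_vector_derivative_def]]
  by (simp_all add: has_field_derivative_def mult_commute_abs)

locale pa_system =
  fixes \<alpha> \<gamma> \<mu> \<delta> \<rho> \<beta> :: real
  assumes beta: "\<beta> = \<alpha> + \<gamma>" and beta_pos: "\<beta> > 0"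
    and delta_nonneg: "\<delta> \<ge> 0" and rho_pos: "\<rho> > 0"
begin

definition p_star :: real where "p_star = (1 - \<mu> / \<beta>) / 2"

lemma two_beta_p_star: "2 * \<beta> * p_star = \<beta> - \<mu>"
  using beta_pos by (simp add: p_star_def field_simps)

lemma exp_neg_rho_tendsto_0: "((\<lambda>t. exp (- \<rho> * t)) \<longlongrightarrow> 0) at_top"
  using rho_pos by real_asymp

lemma p_star_pos_iff: "p_star > 0 \<longleftrightarrow> \<mu> < \<beta>"
  using beta_pos by (simp add: p_star_def field_simps)

text \<open>Width of the envelope \<open>[(p_star - D) exp (-X), (p_star + D) exp X]\<close>, \<open>X = \<bar>\<delta> - \<beta>\<bar> D / \<rho>\<close>,
  that the comparison bounds give for \<open>p\<close> on a trajectory starting \<open>D\<close>-close to \<open>(p_star, 0)\<close>,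
  plus the bound \<open>D\<close> on \<open>a\<close>.\<close>
definition E1_modulus :: "real \<Rightarrow> real" where
  "E1_modulus D =
     (p_star + D) * exp (\<bar>\<delta> - \<beta>\<bar> * D / \<rho>) - (p_star - D) * exp (- (\<bar>\<delta> - \<beta>\<bar> * D / \<rho>)) + D"

lemma pa_field_eq:
  "pa_field \<alpha> \<gamma> \<mu> \<delta> \<rho> (P, A) =
     (P * (2 * \<beta> * (p_star - P) + (\<delta> - \<beta>) * A), - (2 * \<delta> * P + \<rho>) * A)"
  unfolding pa_field_def Let_def beta[symmetric] right_diff_distrib two_beta_p_star
  by (simp add: algebra_simps)

end

locale pa_trajectory = pa_system +
  fixes x :: "real \<Rightarrow> real \<times> real"
  assumes solution: "is_solution (pa_field \<alpha> \<gamma> \<mu> \<delta> \<rho>) x" and initial: "x 0 \<in> feas"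
begin

definition p :: "real \<Rightarrow> real" where "p t = fst (x t)"
definition a :: "real \<Rightarrow> real" where "a t = snd (x t)"
definition p_rate :: "real \<Rightarrow> real" where "p_rate t = 2 * \<beta> * (p_star - p t) + (\<delta> - \<beta>) * a t"

lemma x_eq: "x t = (p t, a t)"
  by (simp add: p_def a_def)

lemma initial_bounds: "p 0 \<ge> 0" "a 0 \<ge> 0" "2 * p 0 + a 0 \<le> 1"
  using initial by (auto simp: feas_def p_def a_def)

lemma x_has_derivative:
  "t \<ge> 0 \<Longrightarrow> (x has_vector_derivative (p t * p_rate t, - (2 * \<delta> * p t + \<rho>) * a t)) (at t within {0..})"
  using solution by (simp add: is_solution_def x_eq pa_field_eq p_rate_def)

lemma p_has_derivative: "t \<ge> 0 \<Longrightarrow> (p has_real_derivative p t * p_rate t) (at t within {0..})"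
  using has_vector_derivative_PairD(1)[OF x_has_derivative] by (simp add: p_def[abs_def])

lemma a_has_derivative:
  "t \<ge> 0 \<Longrightarrow> (a has_real_derivative a t * - (2 * \<delta> * p t + \<rho>)) (at t within {0..})"
  using has_vector_derivative_PairD(2)[OF x_has_derivative] by (simp add: a_def[abs_def] mult.commute)

lemma continuous_on_x: "continuous_on {0..} x"
  using x_has_derivative
  by (metis has_vector_derivative_continuous atLeast_iff continuous_on_eq_continuous_within)

lemma continuous_on_p: "continuous_on {0..} p"
  unfolding p_def[abs_def] by (intro continuous_intros continuous_on_x)

lemma continuous_on_p_rate: "continuous_on {0..} p_rate"
  unfolding p_rate_def[abs_def] p_def[abs_def] a_def[abs_def] by (intro continuous_intros continuous_on_x)

lemma p_eq_exp_integral: "t \<ge> 0 \<Longrightarrow> p t = p 0 * exp (integral {0..t} p_rate)"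
  by (rule linear_ode_eq_exp_integral[OF p_has_derivative continuous_on_p_rate])

lemma a_eq_exp_integral:
  assumes "t \<ge> 0" shows "a t = a 0 * exp (integral {0..t} (\<lambda>s. - (2 * \<delta> * p s + \<rho>)))"
proof (rule linear_ode_eq_exp_integral[OF a_has_derivative _ assms])
  show "continuous_on {0..} (\<lambda>s. - (2 * \<delta> * p s + \<rho>))"
    by (intro continuous_intros continuous_on_p)
qed

lemma p_nonneg: "t \<ge> 0 \<Longrightarrow> p t \<ge> 0"
  using p_eq_exp_integral[of t] initial_bounds by simp

lemma p_eq_0: "p 0 = 0 \<Longrightarrow> t \<ge> 0 \<Longrightarrow> p t = 0"
  using p_eq_exp_integral[of t] by simp

lemma a_nonneg: "t \<ge> 0 \<Longrightarrow> a t \<ge> 0"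
  using a_eq_exp_integral[of t] initial_bounds by simp

lemma a_le_exp:
  assumes t: "t \<ge> 0"
  shows "a t \<le> a 0 * exp (- \<rho> * t)"
proof -
  have "continuous_on {0..t} p"
    by (rule continuous_on_subset[OF continuous_on_p]) auto
  then have "continuous_on {0..t} (\<lambda>s. - (2 * \<delta> * p s + \<rho>))"
    by (intro continuous_intros)
  then have "integral {0..t} (\<lambda>s. - (2 * \<delta> * p s + \<rho>)) \<le> integral {0..t} (\<lambda>s. - \<rho>)"
    using p_nonneg delta_nonneg by (intro integral_le integrable_continuous_interval) auto
  also have "\<dots> = - \<rho> * t" using t by simp
  finally have "a 0 * exp (integral {0..t} (\<lambda>s. - (2 * \<delta> * p s + \<rho>))) \<le> a 0 * exp (- \<rho> * t)"
    using initial_bounds by (intro mult_left_mono) auto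
  then show ?thesis using a_eq_exp_integral[OF t] by simp
qed

lemma a_le_initial:
  assumes t: "t \<ge> 0" shows "a t \<le> a 0"
proof -
  have "exp (- \<rho> * t) \<le> 1" using rho_pos t by simp
  then show ?thesis using a_le_exp[OF t] initial_bounds(2) by (metis mult_left_le order_trans)
qed

lemma a_tendsto_0: "(a \<longlongrightarrow> 0) at_top"
proof (rule tendsto_sandwich)
  show "eventually (\<lambda>t. 0 \<le> a t) at_top"
    by (rule eventually_at_top_linorderI) (rule a_nonneg)
  show "eventually (\<lambda>t. a t \<le> a 0 * exp (- \<rho> * t)) at_top"
    by (rule eventually_at_top_linorderI) (rule a_le_exp)
  show "((\<lambda>t. a 0 * exp (- \<rho> * t)) \<longlongrightarrow> 0) at_top"
    using exp_neg_rho_tendsto_0 by (rule tendsto_mult_right_zero)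
qed simp

definition perturbation_bound :: "real \<Rightarrow> real" where
  "perturbation_bound t = \<bar>\<delta> - \<beta>\<bar> * a 0 * exp (- \<rho> * t)"

lemma perturbation_bound_nonneg: "perturbation_bound t \<ge> 0"
  using initial_bounds by (simp add: perturbation_bound_def)

lemma p_rate_bounds:
  assumes t: "t \<ge> 0"
  shows "p_rate t \<le> 2 * \<beta> * (p_star - p t) + perturbation_bound t"
    and "2 * \<beta> * (p_star - p t) - perturbation_bound t \<le> p_rate t"
proof -
  have "\<bar>\<delta> - \<beta>\<bar> * a t \<le> \<bar>\<delta> - \<beta>\<bar> * (a 0 * exp (- \<rho> * t))"
    using a_le_exp[OF t] by (rule mult_left_mono) simp
  then have "\<bar>(\<delta> - \<beta>) * a t\<bar> \<le> perturbation_bound t"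
    using a_nonneg[OF t] by (simp add: perturbation_bound_def abs_mult mult.assoc)
  then show "p_rate t \<le> 2 * \<beta> * (p_star - p t) + perturbation_bound t"
    and "2 * \<beta> * (p_star - p t) - perturbation_bound t \<le> p_rate t"
    by (simp_all add: p_rate_def abs_le_iff)
qed

definition perturbation_integral :: "real \<Rightarrow> real" where
  "perturbation_integral t = \<bar>\<delta> - \<beta>\<bar> * a 0 * (1 - exp (- \<rho> * t)) / \<rho>"

lemma perturbation_integral_has_derivative:
  "(perturbation_integral has_real_derivative perturbation_bound t) (at t within {0..})"
  unfolding perturbation_integral_def[abs_def] perturbation_bound_def
  using rho_pos by (auto intro!: derivative_eq_intros simp: field_simps)

lemma perturbation_integral_0: "perturbation_integral 0 = 0"
  by (simp add: perturbation_integral_def)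

lemma perturbation_integral_le: "perturbation_integral t \<le> \<bar>\<delta> - \<beta>\<bar> * a 0 / \<rho>"
  unfolding perturbation_integral_def
  using rho_pos initial_bounds(2) by (intro divide_right_mono mult_left_le) auto

lemma p_upper_bound:
  assumes t: "t \<ge> 0"
  shows "p t \<le> max (p 0) p_star * exp (\<bar>\<delta> - \<beta>\<bar> * a 0 / \<rho>)"
proof -
  have "p t \<le> max (p 0) p_star * exp (perturbation_integral t - perturbation_integral 0)"
  proof (rule growth_upper_bound[OF p_has_derivative perturbation_integral_has_derivative
        perturbation_bound_nonneg p_nonneg _ t])
    fix s :: real assume s: "s \<ge> 0" and above: "p s > p_star"
    have "2 * \<beta> * (p_star - p s) \<le> 0"
      using above beta_pos by (intro mult_nonneg_nonpos) auto
    then show "p_rate s \<le> perturbation_bound s" using p_rate_bounds(1)[OF s] by linarith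
  qed
  also have "\<dots> \<le> max (p 0) p_star * exp (\<bar>\<delta> - \<beta>\<bar> * a 0 / \<rho>)"
    using initial_bounds(1) perturbation_integral_le[of t]
    by (intro mult_left_mono exp_mono) (simp_all add: perturbation_integral_0 max.coboundedI1)
  finally show ?thesis .
qed

lemma p_lower_bound:
  assumes "\<mu> < \<beta>" and t: "t \<ge> 0"
  shows "min (p 0) p_star * exp (- (\<bar>\<delta> - \<beta>\<bar> * a 0 / \<rho>)) \<le> p t"
proof -
  have "min (p 0) p_star * exp (- (\<bar>\<delta> - \<beta>\<bar> * a 0 / \<rho>))
      \<le> min (p 0) p_star * exp (perturbation_integral 0 - perturbation_integral t)"
    using initial_bounds(1) perturbation_integral_le[of t] p_star_pos_iff assms
    by (intro mult_left_mono exp_mono) (simp_all add: perturbation_integral_0)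
  also have "\<dots> \<le> p t"
  proof (rule growth_lower_bound[OF p_has_derivative perturbation_integral_has_derivative
        perturbation_bound_nonneg p_nonneg _ t])
    fix s :: real assume s: "s \<ge> 0" and below: "p s < p_star"
    have "2 * \<beta> * (p_star - p s) \<ge> 0"
      using below beta_pos by (intro mult_nonneg_nonneg) auto
    then show "- perturbation_bound s \<le> p_rate s" using p_rate_bounds(2)[OF s] by linarith
  qed
  finally show ?thesis .
qed

lemma eventually_perturbation_bound_le:
  assumes "c > 0"
  obtains T where "T \<ge> 0" "\<And>t. t \<ge> T \<Longrightarrow> perturbation_bound t \<le> c"
proof -
  have "(perturbation_bound \<longlongrightarrow> 0) at_top"
    unfolding perturbation_bound_def[abs_def] using exp_neg_rho_tendsto_0 by (rule tendsto_mult_right_zero)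
  then have "eventually (\<lambda>t. perturbation_bound t < c) at_top"
    using assms by (rule order_tendstoD)
  then obtain N where "\<And>t. t \<ge> N \<Longrightarrow> perturbation_bound t < c"
    unfolding eventually_at_top_linorder by blast
  then show ?thesis using that[of "max N 0"] by force
qed

lemma p_eventually_below:
  assumes "max 0 p_star < L"
  shows "eventually (\<lambda>t. p t < L) at_top"
proof -
  define \<epsilon> where "\<epsilon> = (L - max 0 p_star) / 2"
  have \<epsilon>: "\<epsilon> > 0" using assms by (simp add: \<epsilon>_def)
  obtain T where T: "T \<ge> 0" "\<And>t. t \<ge> T \<Longrightarrow> perturbation_bound t \<le> \<beta> * \<epsilon>"
    using eventually_perturbation_bound_le[of "\<beta> * \<epsilon>"] \<epsilon> beta_pos by auto
  have "eventually (\<lambda>t. p t \<le> max 0 p_star + \<epsilon>) at_top"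
  proof (rule deriv_le_neg_above_imp_eventually_below[of T p "\<lambda>t. p t * p_rate t" "\<beta> * \<epsilon> * \<epsilon>"])
    show "(p has_real_derivative p t * p_rate t) (at t within {T..})" if "t \<ge> T" for t
      using p_has_derivative[of t] that T by (auto intro: DERIV_subset)
    show "\<beta> * \<epsilon> * \<epsilon> > 0" using beta_pos \<epsilon> by simp
    fix t assume t: "t \<ge> T" and above: "p t \<ge> max 0 p_star + \<epsilon>"
    have "2 * \<beta> * (p_star - p t) \<le> 2 * \<beta> * (- \<epsilon>)"
      using above beta_pos by (intro mult_left_mono) auto
    then have "p_rate t \<le> - (\<beta> * \<epsilon>)" using p_rate_bounds(1)[of t] T t by fastforce
    then have "p t * p_rate t \<le> p t * - (\<beta> * \<epsilon>)" using p_nonneg[of t] T t by (intro mult_left_mono) auto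
    also have "\<dots> \<le> \<epsilon> * - (\<beta> * \<epsilon>)" using above beta_pos \<epsilon> by (intro mult_right_mono_neg) auto
    finally show "p t * p_rate t \<le> - (\<beta> * \<epsilon> * \<epsilon>)" by (simp add: algebra_simps)
  qed
  moreover have "max 0 p_star + \<epsilon> < L" using assms by (simp add: \<epsilon>_def field_simps)
  ultimately show ?thesis by (auto elim: eventually_mono)
qed

lemma p_eventually_above:
  assumes "\<mu> < \<beta>" and "p 0 > 0" and "L < p_star"
  shows "eventually (\<lambda>t. L < p t) at_top"
proof -
  define \<epsilon> where "\<epsilon> = (p_star - L) / 2"
  define m where "m = min (p 0) p_star * exp (- (\<bar>\<delta> - \<beta>\<bar> * a 0 / \<rho>))"
  have \<epsilon>: "\<epsilon> > 0" using assms by (simp add: \<epsilon>_def)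
  have m: "m > 0" using assms p_star_pos_iff by (simp add: m_def)
  obtain T where T: "T \<ge> 0" "\<And>t. t \<ge> T \<Longrightarrow> perturbation_bound t \<le> \<beta> * \<epsilon>"
    using eventually_perturbation_bound_le[of "\<beta> * \<epsilon>"] \<epsilon> beta_pos by auto
  have "eventually (\<lambda>t. - p t \<le> - (p_star - \<epsilon>)) at_top"
  proof (rule deriv_le_neg_above_imp_eventually_below[of T "\<lambda>t. - p t" "\<lambda>t. - (p t * p_rate t)" "m * (\<beta> * \<epsilon>)"])
    show "((\<lambda>t. - p t) has_real_derivative - (p t * p_rate t)) (at t within {T..})" if "t \<ge> T" for t
      using p_has_derivative[of t] that T by (auto intro: DERIV_subset DERIV_minus)
    show "m * (\<beta> * \<epsilon>) > 0" using beta_pos \<epsilon> m by simp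
    fix t assume t: "t \<ge> T" and below: "- p t \<ge> - (p_star - \<epsilon>)"
    have "2 * \<beta> * \<epsilon> \<le> 2 * \<beta> * (p_star - p t)"
      using below beta_pos by (intro mult_left_mono) auto
    then have "\<beta> * \<epsilon> \<le> p_rate t" using p_rate_bounds(2)[of t] T t by fastforce
    then have "m * (\<beta> * \<epsilon>) \<le> p t * p_rate t"
      using p_lower_bound[OF assms(1), of t] m beta_pos \<epsilon> T t unfolding m_def
      by (intro mult_mono) auto
    then show "- (p t * p_rate t) \<le> - (m * (\<beta> * \<epsilon>))" by simp
  qed
  moreover have "L < p_star - \<epsilon>" using assms by (simp add: \<epsilon>_def field_simps)
  ultimately show ?thesis by (auto elim: eventually_mono)
qed

lemma p_tendsto_0:
  assumes "\<beta> \<le> \<mu>"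
  shows "(p \<longlongrightarrow> 0) at_top"
proof (rule order_tendstoI)
  fix L :: real assume "L < 0"
  then show "eventually (\<lambda>t. L < p t) at_top"
    using p_nonneg by (intro eventually_at_top_linorderI[of 0]) force
next
  fix L :: real assume "0 < L"
  moreover have "max 0 p_star = 0" using assms p_star_pos_iff by simp
  ultimately show "eventually (\<lambda>t. p t < L) at_top" using p_eventually_below by simp
qed

lemma p_tendsto_p_star:
  assumes "\<mu> < \<beta>" and "p 0 > 0"
  shows "(p \<longlongrightarrow> p_star) at_top"
proof (rule order_tendstoI)
  fix L :: real assume "L < p_star"
  then show "eventually (\<lambda>t. L < p t) at_top" using p_eventually_above assms by blast
next
  fix L :: real assume "p_star < L"
  moreover have "max 0 p_star = p_star" using assms p_star_pos_iff by simp
  ultimately show "eventually (\<lambda>t. p t < L) at_top" using p_eventually_below by simp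
qed

lemma x_tendsto_origin:
  assumes "\<beta> \<le> \<mu>"
  shows "(x \<longlongrightarrow> (0, 0)) at_top"
  using tendsto_Pair[OF p_tendsto_0[OF assms] a_tendsto_0] by (simp add: x_eq[symmetric])

lemma x_tendsto_E1:
  assumes "\<mu> < \<beta>" and "fst (x 0) > 0"
  shows "(x \<longlongrightarrow> (p_star, 0)) at_top"
proof -
  have "p 0 > 0" using assms(2) by (simp add: p_def)
  from tendsto_Pair[OF p_tendsto_p_star[OF assms(1) this] a_tendsto_0]
  show ?thesis by (simp add: x_eq[symmetric])
qed

lemma edge_forward_invariant:
  assumes "fst (x 0) = 0" and t: "t \<ge> 0"
  shows "fst (x t) = 0" and "x t \<in> feas"
proof -
  have "p t = 0" using assms p_eq_0 by (simp add: p_def)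
  moreover have "a t \<le> 1" using a_le_initial[OF t] initial_bounds assms by (simp add: p_def)
  ultimately show "fst (x t) = 0" "x t \<in> feas"
    using a_nonneg[OF t] by (simp_all add: feas_def x_eq)
qed

lemma x_tendsto_origin_from_edge:
  assumes "fst (x 0) = 0"
  shows "(x \<longlongrightarrow> (0, 0)) at_top"
proof -
  have "(p \<longlongrightarrow> 0) at_top"
    using assms p_eq_0 by (intro tendsto_eventually eventually_at_top_linorderI[of 0]) (simp add: p_def)
  from tendsto_Pair[OF this a_tendsto_0] show ?thesis by (simp add: x_eq[symmetric])
qed

lemma dist_origin_bound:
  assumes "\<beta> \<le> \<mu>" and t: "t \<ge> 0"
  shows "dist (x t) (0, 0) \<le> (exp (\<bar>\<delta> - \<beta>\<bar> / \<rho>) + 1) * dist (x 0) (0, 0)"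
proof -
  define D where "D = dist (x 0) (0, 0)"
  have p0: "p 0 \<le> D"
    using dist_fst_le[of "x 0" "(0, 0)"] initial_bounds(1) by (simp add: D_def p_def dist_real_def)
  have a0: "a 0 \<le> D"
    using dist_snd_le[of "x 0" "(0, 0)"] initial_bounds(2) by (simp add: D_def a_def dist_real_def)
  have "p_star \<le> 0" using assms p_star_pos_iff by (meson not_less)
  then have "p t \<le> p 0 * exp (\<bar>\<delta> - \<beta>\<bar> * a 0 / \<rho>)"
    using p_upper_bound[OF t] initial_bounds(1) by (simp add: max_absorb1)
  also have "\<dots> \<le> p 0 * exp (\<bar>\<delta> - \<beta>\<bar> / \<rho>)"
    using initial_bounds rho_pos by (intro mult_left_mono exp_mono divide_right_mono mult_left_le) auto
  also have "\<dots> \<le> D * exp (\<bar>\<delta> - \<beta>\<bar> / \<rho>)" using p0 by simp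
  finally have pt: "p t \<le> D * exp (\<bar>\<delta> - \<beta>\<bar> / \<rho>)" .
  have "dist (x t) (0, 0) \<le> dist (p t) 0 + dist (a t) 0"
    using dist_Pair_le_add[of "p t" "a t" 0 0] by (simp only: x_eq)
  also have "\<dots> = p t + a t" using p_nonneg[OF t] a_nonneg[OF t] by (simp add: dist_real_def)
  also have "\<dots> \<le> D * exp (\<bar>\<delta> - \<beta>\<bar> / \<rho>) + D" using pt a_le_initial[OF t] a0 by simp
  finally show ?thesis by (simp add: D_def algebra_simps)
qed

lemma dist_E1_bound:
  assumes "\<mu> < \<beta>" and t: "t \<ge> 0" and near: "dist (x 0) (p_star, 0) < p_star"
  shows "dist (x t) (p_star, 0) \<le> E1_modulus (dist (x 0) (p_star, 0))"
proof -
  define D where "D = dist (x 0) (p_star, 0)"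
  define X where "X = \<bar>\<delta> - \<beta>\<bar> * D / \<rho>"
  define U where "U = (p_star + D) * exp X"
  define L where "L = (p_star - D) * exp (- X)"
  have p0: "\<bar>p 0 - p_star\<bar> \<le> D"
    using dist_fst_le[of "x 0" "(p_star, 0)"] by (simp add: D_def p_def dist_real_def)
  have a0: "a 0 \<le> D"
    using dist_snd_le[of "x 0" "(p_star, 0)"] initial_bounds(2) by (simp add: D_def a_def dist_real_def)
  have D: "0 \<le> D" "D < p_star" using near by (simp_all add: D_def)
  have X: "0 \<le> X" using D rho_pos by (simp add: X_def)
  have exponent: "\<bar>\<delta> - \<beta>\<bar> * a 0 / \<rho> \<le> X"
    unfolding X_def using a0 rho_pos by (intro divide_right_mono mult_left_mono) auto
  have "p t \<le> max (p 0) p_star * exp (\<bar>\<delta> - \<beta>\<bar> * a 0 / \<rho>)" by (rule p_upper_bound[OF t])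
  also have "\<dots> \<le> U"
    unfolding U_def using p0 D exponent by (intro mult_mono) (auto simp: abs_le_iff)
  finally have "p t \<le> U" .
  have "L \<le> min (p 0) p_star * exp (- (\<bar>\<delta> - \<beta>\<bar> * a 0 / \<rho>))"
    unfolding L_def using p0 D exponent initial_bounds(1) by (intro mult_mono) (auto simp: abs_le_iff)
  also have "\<dots> \<le> p t" by (rule p_lower_bound[OF assms(1) t])
  finally have "L \<le> p t" .
  have "L \<le> p_star - D" unfolding L_def using X D by (intro mult_left_le) auto
  moreover have "p_star + D \<le> U" unfolding U_def using mult_left_mono[of 1 "exp X" "p_star + D"] X D by simp
  ultimately have "\<bar>p t - p_star\<bar> \<le> U - L" using \<open>p t \<le> U\<close> \<open>L \<le> p t\<close> D by linarith
  have "dist (x t) (p_star, 0) \<le> dist (p t) p_star + dist (a t) 0"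
    using dist_Pair_le_add[of "p t" "a t" p_star 0] by (simp only: x_eq)
  also have "\<dots> \<le> (U - L) + D"
    using \<open>\<bar>p t - p_star\<bar> \<le> U - L\<close> a_nonneg[OF t] a_le_initial[OF t] a0 by (simp add: dist_real_def)
  finally show ?thesis by (simp add: E1_modulus_def D_def U_def L_def X_def)
qed

end

context pa_system
begin

lemma pa_trajectoryI:
  assumes "is_solution (pa_field \<alpha> \<gamma> \<mu> \<delta> \<rho>) x" and "x 0 \<in> feas"
  shows "pa_trajectory \<alpha> \<gamma> \<mu> \<delta> \<rho> \<beta> x"
  using pa_system_axioms assms by (simp add: pa_trajectory_def pa_trajectory_axioms_def)

lemma pa_field_origin: "pa_field \<alpha> \<gamma> \<mu> \<delta> \<rho> (0, 0) = 0"
  by (simp add: pa_field_eq zero_prod_def)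

lemma pa_field_E1: "pa_field \<alpha> \<gamma> \<mu> \<delta> \<rho> (p_star, 0) = 0"
  by (simp add: pa_field_eq zero_prod_def)

lemma pa_field_has_derivative_origin:
  "(pa_field \<alpha> \<gamma> \<mu> \<delta> \<rho> has_derivative (\<lambda>h. ((\<beta> - \<mu>) * fst h, - \<rho> * snd h))) (at (0, 0))"
proof -
  have field: "pa_field \<alpha> \<gamma> \<mu> \<delta> \<rho> = (\<lambda>z. (fst z * (2 * \<beta> * (p_star - fst z) + (\<delta> - \<beta>) * snd z),
      - (2 * \<delta> * fst z + \<rho>) * snd z))"
    by (simp add: fun_eq_iff pa_field_eq)
  show ?thesis
    unfolding field by (auto intro!: derivative_eq_intros simp: fun_eq_iff two_beta_p_star)
qed

lemma origin_is_saddle: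
  assumes "\<mu> < \<beta>"
  shows "is_saddle (pa_field \<alpha> \<gamma> \<mu> \<delta> \<rho>) (0, 0)"
  unfolding is_saddle_def
proof (intro conjI exI)
  show "pa_field \<alpha> \<gamma> \<mu> \<delta> \<rho> (0, 0) = 0" by (rule pa_field_origin)
  show "(pa_field \<alpha> \<gamma> \<mu> \<delta> \<rho> has_derivative (\<lambda>h. ((\<beta> - \<mu>) * fst h, - \<rho> * snd h))) (at (0, 0))"
    by (rule pa_field_has_derivative_origin)
  show "(0::real, 1::real) \<noteq> 0" "(1::real, 0::real) \<noteq> 0" by (simp_all add: zero_prod_def)
  show "(\<lambda>h. ((\<beta> - \<mu>) * fst h, - \<rho> * snd h)) (0, 1) = (- \<rho>) *\<^sub>R (0, 1)"
    and "(\<lambda>h. ((\<beta> - \<mu>) * fst h, - \<rho> * snd h)) (1, 0) = (\<beta> - \<mu>) *\<^sub>R (1, 0)"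
    by simp_all
  show "- \<rho> < 0" "0 < \<beta> - \<mu>" using rho_pos assms by simp_all
qed

lemma glob_asym_stable_origin:
  assumes "\<beta> \<le> \<mu>"
  shows "glob_asym_stable feas (pa_field \<alpha> \<gamma> \<mu> \<delta> \<rho>) (0, 0)"
proof -
  have attract: "(x \<longlongrightarrow> (0, 0)) at_top"
    if "is_solution (pa_field \<alpha> \<gamma> \<mu> \<delta> \<rho>) x" "x 0 \<in> feas" for x
    using pa_trajectory.x_tendsto_origin[OF pa_trajectoryI[OF that] assms] .
  have "loc_asym_stable feas (pa_field \<alpha> \<gamma> \<mu> \<delta> \<rho>) (0, 0)"
  proof (rule loc_asym_stableI[where \<phi> = "\<lambda>D. (exp (\<bar>\<delta> - \<beta>\<bar> / \<rho>) + 1) * D" and r = 1])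
    show "dist (x t) (0, 0) \<le> (exp (\<bar>\<delta> - \<beta>\<bar> / \<rho>) + 1) * dist (x 0) (0, 0)"
      if "is_solution (pa_field \<alpha> \<gamma> \<mu> \<delta> \<rho>) x" "x 0 \<in> feas" "t \<ge> 0" for x t
      using pa_trajectory.dist_origin_bound[OF pa_trajectoryI[OF that(1,2)] assms that(3)] .
  qed (use pa_field_origin attract in \<open>simp_all add: continuous_intros\<close>)
  then show ?thesis using attract by (simp add: glob_asym_stable_def)
qed

lemma loc_asym_stable_E1:
  assumes "\<mu> < \<beta>"
  shows "loc_asym_stable feas (pa_field \<alpha> \<gamma> \<mu> \<delta> \<rho>) (p_star, 0)"
proof (rule loc_asym_stableI[where \<phi> = E1_modulus and r = p_star])
  show "isCont E1_modulus 0"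
    unfolding E1_modulus_def[abs_def] using rho_pos by (intro continuous_intros) auto
  show "E1_modulus 0 = 0" by (simp add: E1_modulus_def)
  show "p_star > 0" using assms p_star_pos_iff by simp
  fix x assume x: "is_solution (pa_field \<alpha> \<gamma> \<mu> \<delta> \<rho>) x" "x 0 \<in> feas"
    and near: "dist (x 0) (p_star, 0) < p_star"
  show "dist (x t) (p_star, 0) \<le> E1_modulus (dist (x 0) (p_star, 0))" if "t \<ge> 0" for t
    using pa_trajectory.dist_E1_bound[OF pa_trajectoryI[OF x] assms that near] .
  have "fst (x 0) > 0"
    using dist_fst_le[of "x 0" "(p_star, 0)"] near by (simp add: dist_real_def)
  then show "(x \<longlongrightarrow> (p_star, 0)) at_top"
    by (rule pa_trajectory.x_tendsto_E1[OF pa_trajectoryI[OF x] assms])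
qed (rule pa_field_E1)

end

theorem proposition6p12:
  fixes \<alpha> \<gamma> \<mu> \<delta> \<rho> \<beta> :: real
  assumes pos: "\<alpha> > 0" "\<gamma> > 0" "\<mu> > 0" "\<delta> > 0" "\<rho> > 0"
    and beta: "\<beta> = \<alpha> + \<gamma>"
  defines "f \<equiv> pa_field \<alpha> \<gamma> \<mu> \<delta> \<rho>"
  shows
    "(\<beta> \<le> \<mu> \<longrightarrow>
        glob_asym_stable feas f (0, 0) \<and>
        (\<forall>x. is_solution f x \<and> x 0 \<in> feas \<longrightarrow>
              ((\<lambda>t. fst (x t)) \<longlongrightarrow> 0) at_top \<and> ((\<lambda>t. snd (x t)) \<longlongrightarrow> 0) at_top))
     \<and>
     (\<beta> > \<mu> \<longrightarrow>
        (\<forall>x. is_solution f x \<and> x 0 \<in> feas \<and> fst (x 0) = 0 \<longrightarrow>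
              (\<forall>t\<ge>0. fst (x t) = 0 \<and> x t \<in> feas) \<and>
              ((\<lambda>t. snd (x t)) \<longlongrightarrow> 0) at_top \<and>
              (x \<longlongrightarrow> (0, 0)) at_top) \<and>
        (\<forall>x. is_solution f x \<and> x 0 \<in> feas \<and> fst (x 0) > 0 \<longrightarrow>
              (x \<longlongrightarrow> ((1 - \<mu> / \<beta>) / 2, 0)) at_top) \<and>
        is_saddle f (0, 0) \<and>
        loc_asym_stable feas f ((1 - \<mu> / \<beta>) / 2, 0))"
proof -
  interpret pa_system \<alpha> \<gamma> \<mu> \<delta> \<rho> \<beta>
    using pos beta by unfold_locales auto
  have components: "((\<lambda>t. fst (x t)) \<longlongrightarrow> 0) at_top \<and> ((\<lambda>t. snd (x t)) \<longlongrightarrow> 0) at_top"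
    if "(x \<longlongrightarrow> (0, 0)) at_top" for x :: "real \<Rightarrow> real \<times> real"
    using tendsto_fst[OF that] tendsto_snd[OF that] by simp
  show ?thesis
    unfolding f_def p_star_def[symmetric]
    using glob_asym_stable_origin origin_is_saddle loc_asym_stable_E1
      pa_trajectory.x_tendsto_origin[OF pa_trajectoryI] pa_trajectory.x_tendsto_E1[OF pa_trajectoryI]
      pa_trajectory.edge_forward_invariant[OF pa_trajectoryI]
      pa_trajectory.x_tendsto_origin_from_edge[OF pa_trajectoryI] components
    by (meson not_le)
qed

end
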